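(* Assume $\ker(K)\cap\ker(D)=\{0\}$ and let $\Psi$ be a reconstructor. Let $y^0=Kx^{GT}$, and let $\{\delta_k\}_{k\in\mathbb{N}}$ be a sequence of positive noise levels with $\delta_k\to0$ as $k\to\infty$, with data $y^{\delta_k}=Kx^{GT}+e_k$, $\|e_k\|_2\le\delta_k$. For each $k$ let $x^*_{\Psi,\delta_k}$ be the unique minimizer over $\mathcal{X}$ of $\mathcal{J}_{\Psi,\delta_k}(x)=\|Kx-y^{\delta_k}\|_2^2+\lambda\|w(\Psi(y^{\delta_k}))\odot|Dx|\|_1$, and let $x^*_{\Psi,0}$ denote the unique minimizer over $\mathcal{X}$ of $\mathcal{J}_{\Psi,0}(x)=\|Kx-y^{0}\|_2^2+\lambda\|w(\Psi(y^{0}))\odot|Dx|\|_1$. Then $\{x^*_{\Psi,\delta_k}\}_{k\in\mathbb{N}}$ has a convergent subsequence whose limit is $x^*_{\Psi,0}$.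
   Context: Let $K\in\mathbb{R}^{m\times n}$ with $m\le n$, and let $D_h,D_v\in\mathbb{R}^{n\times n}$ be the discrete horizontal and vertical difference operators; $Dx=\begin{bmatrix}D_hx\\ D_vx\end{bmatrix}\in\mathbb{R}^{2n}$, and $|Dx|\in\mathbb{R}^n$, $(|Dx|)_i=\sqrt{(D_hx)_i^2+(D_vx)_i^2}$. $\mathcal{X}=\{x\in\mathbb{R}^n: x_i\ge 0\ \forall i\}$; $x^{GT}\in\mathcal{X}$ is fixed. Fix $\lambda>0$, $\eta>0$, $p\in(0,1)$, and for $\tilde x\in\mathbb{R}^n$ define $(w(\tilde{x}))_i=\big(\eta/\sqrt{\eta^2+(|D\tilde{x}|)_i^2}\big)^{1-p}$. A reconstructor is a Lipschitz continuous map $\Psi:\mathbb{R}^m\to\mathbb{R}^n$. $\odot$ is the entrywise product. *)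

theory Defs
  imports "HOL-Analysis.Analysis"
begin

definition nonneg_orthant :: "(real^'n) set" where
  "nonneg_orthant = {x. \<forall>i. x $ i \<ge> 0}"

text \<open>Pointwise gradient magnitude \<open>|Dx|\<close>, \<open>Dx = [D_h x; D_v x]\<close>.\<close>
definition grad_mag :: "real^'n^'n \<Rightarrow> real^'n^'n \<Rightarrow> real^'n \<Rightarrow> real^'n" where
  "grad_mag Dh Dv x = (\<chi> i. sqrt (((Dh *v x) $ i)\<^sup>2 + ((Dv *v x) $ i)\<^sup>2))"

definition weights :: "real^'n^'n \<Rightarrow> real^'n^'n \<Rightarrow> real \<Rightarrow> real \<Rightarrow> real^'n \<Rightarrow> real^'n" where
  "weights Dh Dv \<eta> p xt =
     (\<chi> i. (\<eta> / sqrt (\<eta>\<^sup>2 + ((grad_mag Dh Dv xt) $ i)\<^sup>2)) powr (1 - p))"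

definition norm1 :: "real^'n \<Rightarrow> real" where
  "norm1 v = (\<Sum>i\<in>UNIV. \<bar>v $ i\<bar>)"

definition objJ :: "real^'n^'m \<Rightarrow> real^'n^'n \<Rightarrow> real^'n^'n \<Rightarrow> real \<Rightarrow> real \<Rightarrow> real
      \<Rightarrow> (real^'m \<Rightarrow> real^'n) \<Rightarrow> real^'m \<Rightarrow> real^'n \<Rightarrow> real" where
  "objJ K Dh Dv lam \<eta> p \<Psi> y x =
     (norm (K *v x - y))\<^sup>2
     + lam * norm1 (weights Dh Dv \<eta> p (\<Psi> y) * grad_mag Dh Dv x)"

definition is_unique_minimizer :: "('a \<Rightarrow> real) \<Rightarrow> 'a set \<Rightarrow> 'a \<Rightarrow> bool" where
  "is_unique_minimizer f S x \<longleftrightarrow>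
     x \<in> S \<and> (\<forall>z\<in>S. f x \<le> f z) \<and> (\<forall>x'\<in>S. (\<forall>z\<in>S. f x' \<le> f z) \<longrightarrow> x' = x)"

end

theory Submission
  imports Defs
begin

text \<open>
  The objective is jointly continuous in the data and the iterate, because \<open>\<Psi>\<close> is Lipschitz
  and the weights depend continuously on \<open>\<Psi>(y)\<close>. As the data converge, the weights converge to
  strictly positive limits, so eventually they are bounded below by a common \<open>c > 0\<close>; together
  with \<open>ker K \<inter> ker D = {0}\<close> this makes the objectives uniformly coercive, so the minimizers
  stay bounded. A limit point of a convergent subsequence minimizes the limit objective over the
  closed orthant, hence it is the unique such minimizer.
\<close>

lemma tendsto_matrix_vector_mult:
  fixes A :: "real^'n^'m"
  assumes "(x \<longlongrightarrow> l) F"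
  shows "((\<lambda>k. A *v x k) \<longlongrightarrow> A *v l) F"
  using bounded_linear.tendsto[OF matrix_vector_mul_bounded_linear assms] .

lemma tendsto_vector_times:
  fixes a b :: "'a \<Rightarrow> real^'n"
  assumes "(a \<longlongrightarrow> la) F" "(b \<longlongrightarrow> lb) F"
  shows "((\<lambda>k. a k * b k) \<longlongrightarrow> la * lb) F"
  unfolding times_vec_def
  by (intro tendsto_vec_lambda tendsto_mult tendsto_vec_nth assms)

lemma tendsto_grad_mag:
  assumes "(x \<longlongrightarrow> l) F"
  shows "((\<lambda>k. grad_mag Dh Dv (x k)) \<longlongrightarrow> grad_mag Dh Dv l) F"
  unfolding grad_mag_def
  by (intro tendsto_vec_lambda tendsto_real_sqrt tendsto_add tendsto_power tendsto_vec_nth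
      tendsto_matrix_vector_mult assms)

lemma tendsto_weights:
  assumes "(x \<longlongrightarrow> l) F" "\<eta> > 0"
  shows "((\<lambda>k. weights Dh Dv \<eta> p (x k)) \<longlongrightarrow> weights Dh Dv \<eta> p l) F"
  unfolding weights_def
proof (intro tendsto_vec_lambda tendsto_powr)
  fix i
  show "((\<lambda>k. \<eta> / sqrt (\<eta>\<^sup>2 + (grad_mag Dh Dv (x k) $ i)\<^sup>2))
          \<longlongrightarrow> \<eta> / sqrt (\<eta>\<^sup>2 + (grad_mag Dh Dv l $ i)\<^sup>2)) F"
    using assms(2)
    by (intro tendsto_divide tendsto_const tendsto_real_sqrt tendsto_add tendsto_power
        tendsto_vec_nth tendsto_grad_mag assms(1)) (simp add: add_pos_nonneg)
  show "\<eta> / sqrt (\<eta>\<^sup>2 + (grad_mag Dh Dv l $ i)\<^sup>2) \<noteq> 0"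
    using assms(2) by (simp add: add_pos_nonneg)
qed auto

lemma weights_pos: "\<eta> > 0 \<Longrightarrow> weights Dh Dv \<eta> p x $ i > 0"
  unfolding weights_def by (simp add: add_pos_nonneg)

lemma tendsto_objJ:
  assumes "continuous_on UNIV \<Psi>" "\<eta> > 0" "(y \<longlongrightarrow> ly) F" "(x \<longlongrightarrow> lx) F"
  shows "((\<lambda>k. objJ K Dh Dv lam \<eta> p \<Psi> (y k) (x k)) \<longlongrightarrow> objJ K Dh Dv lam \<eta> p \<Psi> ly lx) F"
proof -
  have "((\<lambda>k. \<Psi> (y k)) \<longlongrightarrow> \<Psi> ly) F"
    using continuous_on_tendsto_compose[OF assms(1) assms(3)] by simp
  then show ?thesis
    unfolding objJ_def norm1_def
    by (intro tendsto_add tendsto_mult tendsto_const tendsto_sum tendsto_rabs tendsto_vec_nth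
        tendsto_power tendsto_norm tendsto_diff tendsto_vector_times tendsto_weights
        tendsto_grad_mag tendsto_matrix_vector_mult assms(2-4))
qed

lemma eventually_components_bounded_below:
  fixes f :: "'a \<Rightarrow> real^'n"
  assumes "(f \<longlongrightarrow> l) F" "\<And>i. l $ i > 0"
  obtains c where "c > 0" "\<forall>\<^sub>F k in F. \<forall>i. c < f k $ i"
proof
  define c where "c = Min (range (\<lambda>i. l $ i)) / 2"
  show "c > 0"
    unfolding c_def using assms(2) by simp
  show "\<forall>\<^sub>F k in F. \<forall>i. c < f k $ i"
  proof (rule eventually_all_finite)
    fix i
    have "Min (range (\<lambda>i. l $ i)) \<le> l $ i" by (rule Min_le) auto
    then have "c < l $ i" unfolding c_def using assms(2)[of i] by linarith
    then show "\<forall>\<^sub>F k in F. c < f k $ i"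
      using order_tendstoD(1)[OF tendsto_vec_nth[OF assms(1)]] by blast
  qed
qed

lemma closed_nonneg_orthant: "closed nonneg_orthant"
  unfolding nonneg_orthant_def
  by (intro closed_Collect_all closed_Collect_le continuous_on_const continuous_on_component
      continuous_on_id)

lemma injective_matrix_triple_bounded_below:
  fixes K :: "real^'n^'m" and Dh Dv :: "real^'n^'n"
  assumes "\<forall>x. K *v x = 0 \<and> Dh *v x = 0 \<and> Dv *v x = 0 \<longrightarrow> x = 0"
  obtains B where "B > 0" "\<And>x. B * norm x \<le> norm (K *v x) + norm (Dh *v x) + norm (Dv *v x)"
proof -
  define L where "L x = (K *v x, Dh *v x, Dv *v x)" for x
  have lin: "linear L"
    unfolding L_def
    using bounded_linear_Pair[OF matrix_vector_mul_bounded_linear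
        bounded_linear_Pair[OF matrix_vector_mul_bounded_linear matrix_vector_mul_bounded_linear]]
    by (rule bounded_linear.linear)
  have "inj L"
  proof (rule linear_injective_0[OF lin, THEN iffD2], intro allI impI)
    fix x
    assume "L x = 0"
    then have "K *v x = 0 \<and> Dh *v x = 0 \<and> Dv *v x = 0"
      unfolding L_def zero_prod_def by simp
    then show "x = 0"
      using assms by blast
  qed
  then obtain B where "B > 0" "\<And>x. B * norm x \<le> norm (L x)"
    using linear_inj_bounded_below_pos[OF lin] by blast
  moreover have "norm (L x) \<le> norm (K *v x) + norm (Dh *v x) + norm (Dv *v x)" for x
    unfolding L_def
    using norm_Pair_le[of "K *v x" "(Dh *v x, Dv *v x)"] norm_Pair_le[of "Dh *v x" "Dv *v x"]
    by linarith
  ultimately show ?thesis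
    using that order_trans by blast
qed

lemma norm_le_norm1_sqrt_sum_squares:
  fixes u v :: "real^'n"
  shows "norm u \<le> norm1 (\<chi> i. sqrt ((u $ i)\<^sup>2 + (v $ i)\<^sup>2))"
proof -
  have "norm u \<le> (\<Sum>i\<in>UNIV. \<bar>u $ i\<bar>)" by (rule norm_le_l1_cart)
  also have "\<dots> \<le> norm1 (\<chi> i. sqrt ((u $ i)\<^sup>2 + (v $ i)\<^sup>2))"
    unfolding norm1_def
    by (intro sum_mono) (simp add: real_sqrt_abs[symmetric] del: real_sqrt_abs)
  finally show ?thesis .
qed

lemma norm_diff_ops_le_norm1_grad_mag:
  "norm (Dh *v x) + norm (Dv *v x) \<le> 2 * norm1 (grad_mag Dh Dv x)"
  using norm_le_norm1_sqrt_sum_squares[of "Dh *v x" "Dv *v x"]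
    norm_le_norm1_sqrt_sum_squares[of "Dv *v x" "Dh *v x"]
  unfolding grad_mag_def by (simp add: add.commute)

lemma norm1_weighted_ge:
  fixes w g :: "real^'n"
  assumes "\<And>i. c \<le> w $ i" "\<And>i. 0 \<le> g $ i"
  shows "c * norm1 g \<le> norm1 (w * g)"
  unfolding norm1_def sum_distrib_left
proof (intro sum_mono)
  fix i
  have "c * g $ i \<le> w $ i * g $ i"
    using assms by (intro mult_right_mono)
  then show "c * \<bar>g $ i\<bar> \<le> \<bar>(w * g) $ i\<bar>"
    using assms(2)[of i] by simp
qed

lemma objJ_coercive:
  fixes K :: "real^'n^'m" and Dh Dv :: "real^'n^'n"
  assumes "\<forall>x. K *v x = 0 \<and> Dh *v x = 0 \<and> Dv *v x = 0 \<longrightarrow> x = 0" "lam > 0" "c > 0"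
  obtains B where "B > 0"
    "\<And>y x A. (\<And>i. c \<le> weights Dh Dv \<eta> p (\<Psi> y) $ i) \<Longrightarrow> objJ K Dh Dv lam \<eta> p \<Psi> y x \<le> A
       \<Longrightarrow> B * norm x \<le> sqrt A + norm y + 2 * (A / (lam * c))"
proof -
  obtain B where B: "B > 0" "\<And>x. B * norm x \<le> norm (K *v x) + norm (Dh *v x) + norm (Dv *v x)"
    using injective_matrix_triple_bounded_below[OF assms(1)] by blast
  have bound: "B * norm x \<le> sqrt A + norm y + 2 * (A / (lam * c))"
    if w: "\<And>i. c \<le> weights Dh Dv \<eta> p (\<Psi> y) $ i" and J: "objJ K Dh Dv lam \<eta> p \<Psi> y x \<le> A"
    for y x A
  proof -
    define g where "g = norm1 (grad_mag Dh Dv x)"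
    define r where "r = norm1 (weights Dh Dv \<eta> p (\<Psi> y) * grad_mag Dh Dv x)"
    have J': "(norm (K *v x - y))\<^sup>2 + lam * r \<le> A"
      using J unfolding objJ_def r_def .
    have "0 \<le> g"
      unfolding g_def norm1_def by (simp add: sum_nonneg)
    have "c * g \<le> r"
      unfolding r_def g_def using w by (intro norm1_weighted_ge) (auto simp: grad_mag_def)
    moreover have "0 \<le> c * g"
      using \<open>0 \<le> g\<close> assms(3) by simp
    ultimately have "0 \<le> lam * r" "lam * (c * g) \<le> lam * r"
      using assms(2) by simp_all
    moreover have "0 \<le> (norm (K *v x - y))\<^sup>2"
      by simp
    ultimately have "(norm (K *v x - y))\<^sup>2 \<le> A" "lam * (c * g) \<le> A"
      using J' by linarith+
    then have "norm (K *v x - y) \<le> sqrt A" "g \<le> A / (lam * c)"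
      using assms(2,3) by (simp_all add: real_le_rsqrt field_simps)
    then have "norm (K *v x) \<le> sqrt A + norm y" "g \<le> A / (lam * c)"
      using norm_triangle_sub[of "K *v x" y] by linarith+
    then show ?thesis
      using B(2)[of x] norm_diff_ops_le_norm1_grad_mag[of Dh x Dv] unfolding g_def by linarith
  qed
  show ?thesis
    using that[OF B(1) bound] .
qed

lemma objJ_minimizers_bounded:
  fixes K :: "real^'n^'m" and Dh Dv :: "real^'n^'n"
  assumes "\<forall>x. K *v x = 0 \<and> Dh *v x = 0 \<and> Dv *v x = 0 \<longrightarrow> x = 0" "lam > 0" "\<eta> > 0"
    and "continuous_on UNIV \<Psi>" "y \<longlonglongrightarrow> ly"
    and "\<And>k. objJ K Dh Dv lam \<eta> p \<Psi> (y k) (x k) \<le> objJ K Dh Dv lam \<eta> p \<Psi> (y k) z"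
  shows "bounded (range x)"
proof -
  define J where "J = objJ K Dh Dv lam \<eta> p \<Psi>"
  have "(\<lambda>k. weights Dh Dv \<eta> p (\<Psi> (y k))) \<longlonglongrightarrow> weights Dh Dv \<eta> p (\<Psi> ly)"
    by (intro tendsto_weights continuous_on_tendsto_compose[OF assms(4,5)] assms(3)) auto
  then obtain c where c: "c > 0" "\<forall>\<^sub>F k in sequentially. \<forall>i. c < weights Dh Dv \<eta> p (\<Psi> (y k)) $ i"
    by (rule eventually_components_bounded_below) (simp add: weights_pos assms(3))
  obtain B where B: "B > 0" "\<And>y x A. (\<And>i. c \<le> weights Dh Dv \<eta> p (\<Psi> y) $ i) \<Longrightarrow> J y x \<le> A
      \<Longrightarrow> B * norm x \<le> sqrt A + norm y + 2 * (A / (lam * c))"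
    using objJ_coercive[OF assms(1,2) c(1)] unfolding J_def by blast
  have "(\<lambda>k. J (y k) z) \<longlonglongrightarrow> J ly z"
    unfolding J_def by (intro tendsto_objJ assms(3-5) tendsto_const)
  then obtain A where A: "\<And>k. J (y k) z \<le> A"
    by (metis convergentI convergent_imp_Bseq BseqE abs_le_D1 real_norm_def)
  obtain Y where Y: "\<And>k. norm (y k) \<le> Y"
    using assms(5) by (metis convergentI convergent_imp_Bseq BseqE)
  define M where "M = (sqrt A + Y + 2 * (A / (lam * c))) / B"
  have bound: "norm (x k) \<le> M" if "\<forall>i. c < weights Dh Dv \<eta> p (\<Psi> (y k)) $ i" for k
  proof -
    have "J (y k) (x k) \<le> A"
      using assms(6)[of k] A[of k] unfolding J_def by linarith
    then have "B * norm (x k) \<le> sqrt A + norm (y k) + 2 * (A / (lam * c))"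
      using B(2) that less_imp_le by blast
    then show ?thesis
      unfolding M_def using Y[of k] B(1) by (simp add: pos_le_divide_eq mult.commute)
  qed
  have "\<forall>\<^sub>F k in sequentially. norm (x k) \<le> norm M"
    using c(2) by eventually_elim (metis bound abs_ge_self order_trans real_norm_def)
  then show ?thesis
    unfolding Bseq_eq_bounded[symmetric] by (rule Bseq_eventually_mono) (rule BseqI', rule order_refl)
qed

lemma objJ_limit_of_minimizers:
  assumes "continuous_on UNIV \<Psi>" "\<eta> > 0" "closed S" "y \<longlonglongrightarrow> ly" "x \<longlonglongrightarrow> l"
    and "\<And>k. x k \<in> S"
    and "\<And>k z. z \<in> S \<Longrightarrow> objJ K Dh Dv lam \<eta> p \<Psi> (y k) (x k) \<le> objJ K Dh Dv lam \<eta> p \<Psi> (y k) z"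
  shows "l \<in> S" "z \<in> S \<Longrightarrow> objJ K Dh Dv lam \<eta> p \<Psi> ly l \<le> objJ K Dh Dv lam \<eta> p \<Psi> ly z"
proof -
  show "l \<in> S"
    using closed_sequentially[OF assms(3)] assms(5,6) by blast
  show "objJ K Dh Dv lam \<eta> p \<Psi> ly l \<le> objJ K Dh Dv lam \<eta> p \<Psi> ly z" if "z \<in> S"
    by (rule LIMSEQ_le[OF tendsto_objJ[OF assms(1,2,4,5)] tendsto_objJ[OF assms(1,2,4) tendsto_const]])
      (use assms(7)[OF that] in blast)
qed

theorem theorem3:
  fixes K :: "real^'n^'m" and Dh Dv :: "real^'n^'n"
    and xGT :: "real^'n" and lam \<eta> p :: real
    and \<Psi> :: "real^'m \<Rightarrow> real^'n"
    and \<delta> :: "nat \<Rightarrow> real" and e :: "nat \<Rightarrow> real^'m"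
    and xs :: "nat \<Rightarrow> real^'n" and x0 :: "real^'n"
  assumes mn: "CARD('m) \<le> CARD('n)"
    and lam: "lam > 0" and eta: "\<eta> > 0" and p: "0 < p" "p < 1"
    and xGT: "xGT \<in> nonneg_orthant"
    and ker: "\<forall>x. K *v x = 0 \<and> Dh *v x = 0 \<and> Dv *v x = 0 \<longrightarrow> x = 0"
    and Psi: "\<exists>C. C-lipschitz_on UNIV \<Psi>"
    and delta_pos: "\<forall>k. \<delta> k > 0" and delta_lim: "\<delta> \<longlonglongrightarrow> 0"
    and noise: "\<forall>k. norm (e k) \<le> \<delta> k"
    and xs: "\<forall>k. is_unique_minimizer (objJ K Dh Dv lam \<eta> p \<Psi> (K *v xGT + e k)) nonneg_orthant (xs k)"
    and x0: "is_unique_minimizer (objJ K Dh Dv lam \<eta> p \<Psi> (K *v xGT)) nonneg_orthant x0"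
  shows "\<exists>r. strict_mono r \<and> (xs \<circ> r) \<longlonglongrightarrow> x0"
proof -
  define y where "y k = K *v xGT + e k" for k
  have xs_min: "xs k \<in> nonneg_orthant"
    "z \<in> nonneg_orthant \<Longrightarrow>
       objJ K Dh Dv lam \<eta> p \<Psi> (y k) (xs k) \<le> objJ K Dh Dv lam \<eta> p \<Psi> (y k) z" for k z
    using xs unfolding is_unique_minimizer_def y_def by auto
  have cont: "continuous_on UNIV \<Psi>"
    using Psi lipschitz_on_continuous_on by blast
  have y_lim: "y \<longlonglongrightarrow> K *v xGT"
    unfolding y_def
    using tendsto_add[OF tendsto_const Lim_null_comparison[OF always_eventually[OF noise] delta_lim]]
    by simp
  have "bounded (range xs)"
    using objJ_minimizers_bounded[OF ker lam eta cont y_lim xs_min(2)[OF xGT]] .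
  then obtain l r where r: "strict_mono r" "(xs \<circ> r) \<longlonglongrightarrow> l"
    using bounded_imp_convergent_subsequence by blast
  have "(xs \<circ> r) k \<in> nonneg_orthant"
    "z \<in> nonneg_orthant \<Longrightarrow> objJ K Dh Dv lam \<eta> p \<Psi> ((y \<circ> r) k) ((xs \<circ> r) k)
       \<le> objJ K Dh Dv lam \<eta> p \<Psi> ((y \<circ> r) k) z" for k z
    using xs_min by simp_all
  from objJ_limit_of_minimizers[OF cont eta closed_nonneg_orthant
      LIMSEQ_subseq_LIMSEQ[OF y_lim r(1)] r(2) this]
  have "l = x0"
    using x0 unfolding is_unique_minimizer_def by blast
  with r show ?thesis
    by blast
qed

end
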